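(* Let $n\ge 1$, let $\gamma_1,\dots,\gamma_n\in\mathbb{C}$, and let $f,s_1,\dots,s_n$ be $(n-1)$-times differentiable functions of $z$. Then $$W^{\gamma_1,\dots,\gamma_n}_n(f s_1,\dots,f s_n)=f^n\cdot W^{\gamma_1,\dots,\gamma_n}_n(s_1,\dots,s_n).$$
   Context: For constants $\gamma_1,\dots,\gamma_n$ put $\nabla_i=\partial_z+\gamma_i$. The $Z$-twisted Wronskian ($Z=\mathrm{diag}(\gamma_1,\dots,\gamma_n)$) of functions $s_1,\dots,s_n$ is the determinant $$W^{\gamma_1,\dots,\gamma_n}_n(s_1,\dots,s_n)=\det_{1\le i,j\le n}\big[\nabla_i^{\,j-1}s_i\big].$$ *)

theory Defs
  imports "HOL-Complex_Analysis.Complex_Analysis" "Jordan_Normal_Form.Determinant"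
begin

definition tw_deriv :: "complex \<Rightarrow> (complex \<Rightarrow> complex) \<Rightarrow> (complex \<Rightarrow> complex)" where
  "tw_deriv \<gamma> g = (\<lambda>z. deriv g z + \<gamma> * g z)"

text \<open>Z-twisted Wronskian at the point z; rows indexed by i < n (function s i, twist gamma i),
  columns by j < n (power nabla_i^j), 0-based.\<close>
definition twisted_wronskian ::
  "nat \<Rightarrow> (nat \<Rightarrow> complex) \<Rightarrow> (nat \<Rightarrow> complex \<Rightarrow> complex) \<Rightarrow> complex \<Rightarrow> complex" where
  "twisted_wronskian n \<gamma> s z =
     det (mat n n (\<lambda>(i, j). ((tw_deriv (\<gamma> i)) ^^ j) (s i) z))"

definition k_times_differentiable_on :: "nat \<Rightarrow> (complex \<Rightarrow> complex) \<Rightarrow> complex set \<Rightarrow> bool" where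
  "k_times_differentiable_on k g S \<longleftrightarrow>
     (\<forall>j<k. \<forall>z\<in>S. (deriv ^^ j) g field_differentiable (at z))"

end

theory Submission
  imports Defs
begin

text \<open>Conjugating by the exponential turns the twisted derivative into the ordinary one,
  \<nabla>_c^j g = e^(-c z) (e^(c z) g)^(j), so the ordinary Leibniz rule yields
  \<nabla>_c^j (f g) = \<Sum>_k (j choose k) f^(k) \<nabla>_c^(j-k) g.
  Row by row, the Wronskian matrix of (f s_i) is therefore the Wronskian matrix of (s_i)
  times the upper triangular matrix with entries (j choose l) f^(j-l), whose diagonal is
  constantly f; taking determinants gives the factor f^n.\<close>

text \<open>One complex derivative suffices: by Cauchy's formula, holomorphy then provides all the
  higher derivatives the twisted Leibniz rule needs.\<close>

lemma holomorphic_on_if_k_times_differentiable_on: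
  assumes "k_times_differentiable_on k g S" and "0 < k"
  shows "g holomorphic_on S"
  using assms unfolding k_times_differentiable_on_def holomorphic_on_def
  by (metis funpow_0 field_differentiable_at_within)

lemma tw_deriv_funpow_conv_higher_deriv:
  assumes "g holomorphic_on S" and "open S" and "z \<in> S"
  shows "(tw_deriv c ^^ j) g z = exp (- c * z) * (deriv ^^ j) (\<lambda>w. exp (c * w) * g w) z"
  using assms(3)
proof (induction j arbitrary: z)
  case 0
  then show ?case by (simp add: exp_minus field_simps)
next
  case (Suc j)
  define h where "h = (deriv ^^ j) (\<lambda>w. exp (c * w) * g w)"
  have h: "h holomorphic_on S"
    unfolding h_def using assms(1,2) by (intro holomorphic_intros)
  have "(tw_deriv c ^^ Suc j) g z = deriv ((tw_deriv c ^^ j) g) z + c * (tw_deriv c ^^ j) g z"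
    by (simp add: tw_deriv_def)
  also have "deriv ((tw_deriv c ^^ j) g) z = deriv (\<lambda>w. exp (- c * w) * h w) z"
    using eventually_nhds_in_open[OF assms(2) Suc.prems]
    by (intro deriv_cong_ev refl) (auto elim!: eventually_mono simp: Suc.IH h_def)
  also have "\<dots> = - c * exp (- c * z) * h z + exp (- c * z) * deriv h z"
    using h assms(2) Suc.prems
    by (intro DERIV_imp_deriv)
       (auto intro!: derivative_eq_intros holomorphic_derivI simp: algebra_simps)
  finally show ?case
    using Suc by (simp add: h_def algebra_simps)
qed

lemma tw_deriv_funpow_mult:
  assumes "f holomorphic_on S" and "g holomorphic_on S" and "open S" and "z \<in> S"
  shows "(tw_deriv c ^^ j) (\<lambda>w. f w * g w) z
       = (\<Sum>k = 0..j. of_nat (j choose k) * (deriv ^^ k) f z * (tw_deriv c ^^ (j - k)) g z)"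
proof -
  have eg: "(\<lambda>w. exp (c * w) * g w) holomorphic_on S"
    using assms(2) by (intro holomorphic_intros)
  have "(tw_deriv c ^^ j) (\<lambda>w. f w * g w) z
      = exp (- c * z) * (deriv ^^ j) (\<lambda>w. f w * (exp (c * w) * g w)) z"
    using tw_deriv_funpow_conv_higher_deriv[OF holomorphic_on_mult[OF assms(1,2)] assms(3,4)]
    by (simp add: mult.left_commute)
  also have "\<dots> = exp (- c * z) * (\<Sum>k = 0..j. of_nat (j choose k) * (deriv ^^ k) f z
                     * (deriv ^^ (j - k)) (\<lambda>w. exp (c * w) * g w) z)"
    using higher_deriv_mult[OF assms(1) eg assms(3,4)] by simp
  also have "\<dots> = (\<Sum>k = 0..j. of_nat (j choose k) * (deriv ^^ k) f z * (tw_deriv c ^^ (j - k)) g z)"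
    using assms(2-4)
    by (simp add: sum_distrib_left tw_deriv_funpow_conv_higher_deriv mult.left_commute)
  finally show ?thesis .
qed

definition binomial_toeplitz_mat :: "nat \<Rightarrow> (nat \<Rightarrow> 'a :: comm_ring_1) \<Rightarrow> 'a mat" where
  "binomial_toeplitz_mat n d = mat n n (\<lambda>(l, j). if l \<le> j then of_nat (j choose l) * d (j - l) else 0)"

lemma binomial_toeplitz_mat_carrier [simp]: "binomial_toeplitz_mat n d \<in> carrier_mat n n"
  by (simp add: binomial_toeplitz_mat_def)

lemma det_binomial_toeplitz_mat: "det (binomial_toeplitz_mat n d) = d 0 ^ n"
proof -
  have "upper_triangular (binomial_toeplitz_mat n d)"
    by (auto simp: upper_triangular_def binomial_toeplitz_mat_def)
  moreover have "diag_mat (binomial_toeplitz_mat n d) = replicate n (d 0)"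
    by (auto simp: diag_mat_def binomial_toeplitz_mat_def intro!: nth_equalityI)
  ultimately show ?thesis
    by (simp add: det_upper_triangular[of _ n])
qed

lemma mat_eq_mult_binomial_toeplitz_mat:
  fixes A B :: "nat \<Rightarrow> nat \<Rightarrow> 'a :: comm_ring_1"
  assumes "\<And>i j. i < m \<Longrightarrow> j < n \<Longrightarrow> A i j = (\<Sum>k = 0..j. of_nat (j choose k) * d k * B i (j - k))"
  shows "mat m n (\<lambda>(i, j). A i j) = mat m n (\<lambda>(i, j). B i j) * binomial_toeplitz_mat n d"
proof (rule eq_matI)
  fix i j assume "i < dim_row (mat m n (\<lambda>(i, j). B i j) * binomial_toeplitz_mat n d)"
    and "j < dim_col (mat m n (\<lambda>(i, j). B i j) * binomial_toeplitz_mat n d)"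
  then have i: "i < m" and j: "j < n" by (auto simp: binomial_toeplitz_mat_def)
  have "(mat m n (\<lambda>(i, j). B i j) * binomial_toeplitz_mat n d) $$ (i, j)
      = (\<Sum>l = 0..<n. B i l * (if l \<le> j then of_nat (j choose l) * d (j - l) else 0))"
    using i j by (simp add: binomial_toeplitz_mat_def scalar_prod_def)
  also have "\<dots> = (\<Sum>l = 0..j. B i l * (of_nat (j choose l) * d (j - l)))"
    by (rule sum.mono_neutral_cong_right) (use j in auto)
  also have "\<dots> = (\<Sum>k = 0..j. of_nat (j choose k) * d k * B i (j - k))"
    by (subst sum.atLeastAtMost_rev)
       (auto intro!: sum.cong simp: binomial_symmetric[symmetric] algebra_simps)
  finally show "mat m n (\<lambda>(i, j). A i j) $$ (i, j)
      = (mat m n (\<lambda>(i, j). B i j) * binomial_toeplitz_mat n d) $$ (i, j)"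
    using assms i j by simp
qed (auto simp: binomial_toeplitz_mat_def)

theorem mainTheorem3:
  fixes n :: nat and \<gamma> :: "nat \<Rightarrow> complex" and f :: "complex \<Rightarrow> complex"
    and s :: "nat \<Rightarrow> complex \<Rightarrow> complex" and S :: "complex set"
  assumes "n \<ge> 1" and "open S"
    and "k_times_differentiable_on (n - 1) f S"
    and "\<And>i. i < n \<Longrightarrow> k_times_differentiable_on (n - 1) (s i) S"
    and "z \<in> S"
  shows "twisted_wronskian n \<gamma> (\<lambda>i w. f w * s i w) z = f z ^ n * twisted_wronskian n \<gamma> s z"
proof -
  have leibniz: "(tw_deriv (\<gamma> i) ^^ j) (\<lambda>w. f w * s i w) z
      = (\<Sum>k = 0..j. of_nat (j choose k) * (deriv ^^ k) f z * (tw_deriv (\<gamma> i) ^^ (j - k)) (s i) z)"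
    if "i < n" "j < n" for i j
  proof (cases "j = 0")
    \<comment> \<open>For n = 1 nothing is differentiable, but then only the trivial column j = 0 occurs.\<close>
    case False
    then have "0 < n - 1" using \<open>j < n\<close> by simp
    then show ?thesis
      using assms(2-5) \<open>i < n\<close>
      by (intro tw_deriv_funpow_mult holomorphic_on_if_k_times_differentiable_on) auto
  qed simp
  define B where "B = mat n n (\<lambda>(i, j). (tw_deriv (\<gamma> i) ^^ j) (s i) z)"
  have "twisted_wronskian n \<gamma> (\<lambda>i w. f w * s i w) z
      = det (B * binomial_toeplitz_mat n (\<lambda>k. (deriv ^^ k) f z))"
    unfolding twisted_wronskian_def B_def
    using mat_eq_mult_binomial_toeplitz_mat[OF leibniz] by simp
  also have "\<dots> = det B * f z ^ n"
    by (simp add: det_mult[OF _ binomial_toeplitz_mat_carrier] det_binomial_toeplitz_mat B_def)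
  finally show ?thesis
    by (simp add: twisted_wronskian_def B_def)
qed

end
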